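(* For integers $k\ge 2$, $N\ge 2$, $$\det(\widetilde H)=\frac{N^{\binom{k}{2}}}{k!}\prod_{i=1}^{k-1}(iN+1).$$
   Context: $H[c,c'] = \#\{(d_1,\ldots,d_k)\in\{0,\ldots,N-1\}^k : \lfloor (d_1+\cdots+d_k+c)/N\rfloor = c'\}$ for $c,c'\in\{0,\ldots,k-1\}$; $\widetilde H$ is the leading $(k-1)\times(k-1)$ principal submatrix of $H$ (indices $0,\ldots,k-2$). *)

theory Defs
  imports "HOL-Library.FuncSet" "Jordan_Normal_Form.Determinant"
begin

definition carryH :: "nat \<Rightarrow> nat \<Rightarrow> nat \<Rightarrow> nat \<Rightarrow> nat" where
  "carryH k N c c' = card {d \<in> {0..<k} \<rightarrow>\<^sub>E {0..<N}. ((\<Sum>i<k. d i) + c) div N = c'}"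

definition Htilde :: "nat \<Rightarrow> nat \<Rightarrow> int mat" where
  "Htilde k N = mat (k - 1) (k - 1) (\<lambda>(c, c'). int (carryH k N c c'))"

end

theory Submission
  imports Defs "HOL-Computational_Algebra.Polynomial"
begin

text \<open>Let \<open>T\<^sub>k(j, u) = C(u - j + k, k)\<close> for \<open>j \<le> u\<close> and \<open>0\<close> otherwise. Right-multiplying
  \<open>Htilde k N\<close> by the unitriangular matrix \<open>T\<^sub>k\<close> keeps the determinant, and since
  \<open>T\<^sub>k\<^sub>+\<^sub>1(j, u) = \<Sum>\<^sub>r\<^sub>\<le>\<^sub>u T\<^sub>k(j + r, u)\<close>, summing out the digits one at a time gives
  \<open>(H T\<^sub>k)(c, u) = T\<^sub>k(c, M\<^sub>u - 1) = pochhammer (M\<^sub>u - c) k / k!\<close> with \<open>M\<^sub>u = N (u + 1)\<close>.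
  This rising factorial contains the factors \<open>M\<^sub>u (M\<^sub>u + 1)\<close>, which depend on the column only; the rest
  is \<open>q\<^sub>c(M\<^sub>u)\<close> for a polynomial \<open>q\<^sub>c\<close> of degree \<open>k - 2\<close>, so pulling the factor \<open>N\<close> out of
  the argument costs \<open>N\<close> to the power \<open>0 + 1 + \<dots> + (k - 2)\<close>. Finally \<open>q\<^sub>c(u + 1) = 0\<close> for
  \<open>u < c\<close>, so \<open>(q\<^sub>c(u + 1))\<close> is triangular with diagonal \<open>k! / ((c + 1)(c + 2))\<close>.\<close>

lemma sum_lessThan_mult_blocks:
  fixes g :: "nat \<Rightarrow> 'a::comm_monoid_add"
  shows "(\<Sum>r<R. \<Sum>a<N. g (r * N + a)) = (\<Sum>b<R * N. g b)"
proof -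
  have "(\<Sum>a<N. g (r * N + a)) = (\<Sum>b\<in>{r * N..<r * N + N}. g b)" for r
    using sum.shift_bounds_nat_ivl[of g 0 "r * N" N] by (simp add: lessThan_atLeast0 add.commute)
  then show ?thesis by (simp add: sum.nat_group)
qed

lemma sum_PiE_lessThan_Suc:
  fixes F :: "nat \<Rightarrow> 'a::comm_monoid_add"
  assumes "finite S"
  shows "(\<Sum>d\<in>{0..<Suc k} \<rightarrow>\<^sub>E S. F (\<Sum>i<Suc k. d i))
       = (\<Sum>a\<in>S. \<Sum>d\<in>{0..<k} \<rightarrow>\<^sub>E S. F (a + (\<Sum>i<k. d i)))"
proof -
  have PiE_Suc: "{0..<Suc k} \<rightarrow>\<^sub>E S = (\<lambda>(a, d). d(k := a)) ` (S \<times> ({0..<k} \<rightarrow>\<^sub>E S))"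
    using PiE_insert_eq[of k "{0..<k}" "\<lambda>_. S"] by (simp add: atLeast0_lessThan_Suc)
  have inj: "inj_on (\<lambda>(a, d). d(k := a)) (S \<times> ({0..<k} \<rightarrow>\<^sub>E S))"
    by (rule inj_combinator) simp
  have "(\<Sum>i<k. (d(k := a)) i) = (\<Sum>i<k. d i)" for d :: "nat \<Rightarrow> nat" and a
    by (rule sum.cong) auto
  then show ?thesis
    unfolding PiE_Suc
    by (subst sum.reindex[OF inj]) (auto simp: sum.cartesian_product sum.lessThan_Suc add.commute intro!: sum.cong)
qed

lemma mat_mult_mat:
  "mat n n f * mat n n g = mat n n (\<lambda>(i, j). \<Sum>l<n. f (i, l) * g (l, j))"
  by (rule eq_matI) (auto simp: scalar_prod_def lessThan_atLeast0 intro!: sum.cong)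

lemma det_mat_upper_triangular:
  fixes f :: "nat \<Rightarrow> nat \<Rightarrow> 'a::comm_ring_1"
  assumes "\<And>i j. j < i \<Longrightarrow> i < n \<Longrightarrow> f i j = 0"
  shows "det (mat n n (\<lambda>(i, j). f i j)) = (\<Prod>i<n. f i i)"
proof -
  have "upper_triangular (mat n n (\<lambda>(i, j). f i j))"
    using assms unfolding upper_triangular_def by auto
  then show ?thesis
    by (simp add: det_upper_triangular[of _ n] prod_list_diag_prod lessThan_atLeast0)
qed

lemma det_mat_mult_cols:
  fixes f :: "nat \<Rightarrow> nat \<Rightarrow> 'a::comm_ring_1"
  shows "det (mat n n (\<lambda>(i, j). f i j * c j)) = det (mat n n (\<lambda>(i, j). f i j)) * (\<Prod>j<n. c j)"
proof -
  define D where "D = mat n n (\<lambda>(l, j). if l = j then c j else 0)"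
  have "mat n n (\<lambda>(i, j). f i j * c j) = mat n n (\<lambda>(i, j). f i j) * D"
    unfolding D_def mat_mult_mat by (rule eq_matI) (auto simp: if_distrib sum.delta' cong: if_cong)
  moreover have "det D = (\<Prod>j<n. c j)"
    unfolding D_def by (subst det_mat_upper_triangular) auto
  ultimately show ?thesis
    by (simp add: det_mult[of _ n] D_def)
qed

lemma det_mat_poly_scaled:
  fixes p :: "nat \<Rightarrow> 'a::comm_ring_1 poly"
  assumes "\<And>i. i < n \<Longrightarrow> degree (p i) < n"
  shows "det (mat n n (\<lambda>(i, j). poly (p i) (a * x j)))
       = a ^ (\<Sum>j<n. j) * det (mat n n (\<lambda>(i, j). poly (p i) (x j)))"
proof -
  define C where "C = mat n n (\<lambda>(i, l). coeff (p i) l)"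
  define D where "D b = mat n n (\<lambda>(l, j). if l = j then b ^ l else 0)" for b :: 'a
  define V where "V = mat n n (\<lambda>(l, j). x j ^ l)"
  have DV: "D b * V = mat n n (\<lambda>(l, j). (b * x j) ^ l)" for b
  proof -
    have "(if P then y else 0) * z = (if P then y * z else 0)" for P and y z :: 'a
      by simp
    then show ?thesis
      unfolding D_def V_def mat_mult_mat by (intro eq_matI) (auto simp: sum.delta power_mult_distrib)
  qed
  have poly_sum: "poly (p i) y = (\<Sum>l<n. coeff (p i) l * y ^ l)" if "i < n" for i y
    unfolding poly_altdef using assms[OF that]
    by (intro sum.mono_neutral_left) (auto simp: coeff_eq_0)
  have factor: "mat n n (\<lambda>(i, j). poly (p i) (b * x j)) = C * (D b * V)" for b
    unfolding DV C_def mat_mult_mat by (intro eq_matI) (auto simp: poly_sum)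
  have "det (D b) = b ^ (\<Sum>j<n. j)" for b
    unfolding D_def by (subst det_mat_upper_triangular) (auto simp: power_sum)
  moreover have "det (C * (D b * V)) = det C * (det (D b) * det V)" for b
  proof -
    have "C \<in> carrier_mat n n" "D b \<in> carrier_mat n n" "V \<in> carrier_mat n n"
      by (auto simp: C_def D_def V_def)
    then show ?thesis by (metis det_mult mult_carrier_mat)
  qed
  ultimately have "det (mat n n (\<lambda>(i, j). poly (p i) (b * x j))) = det C * (b ^ (\<Sum>j<n. j) * det V)" for b
    unfolding factor by simp
  from this[of a] this[of 1] show ?thesis by simp
qed

definition tri_binom :: "nat \<Rightarrow> nat \<Rightarrow> nat \<Rightarrow> nat" where
  "tri_binom k j u = (if j \<le> u then (u - j + k) choose k else 0)"

lemma tri_binom_Suc: "tri_binom (Suc k) j u = (\<Sum>r<Suc u. tri_binom k (j + r) u)"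
proof (cases "j \<le> u")
  case True
  define m where "m = u - j"
  have "(\<Sum>r<Suc u. tri_binom k (j + r) u) = (\<Sum>r<Suc u. if r \<le> m then (m - r + k) choose k else 0)"
    using True by (intro sum.cong) (auto simp: tri_binom_def m_def)
  also have "\<dots> = (\<Sum>r\<in>{r \<in> {..<Suc u}. r \<le> m}. (m - r + k) choose k)"
    by (simp only: sum.inter_filter finite_lessThan)
  also have "{r \<in> {..<Suc u}. r \<le> m} = {..m}" using True by (auto simp: m_def)
  also have "(\<Sum>r\<le>m. (m - r + k) choose k) = (\<Sum>r\<le>m. (k + r) choose k)"
    using sum.atLeastAtMost_rev[of "\<lambda>r. (m - r + k) choose k" 0 m] by (simp add: atLeast0AtMost add.commute)
  also have "\<dots> = (k + m + 1) choose (k + 1)"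
    by (rule choose_rising_sum(1))
  also have "\<dots> = tri_binom (Suc k) j u"
    using True by (simp add: tri_binom_def m_def add.commute)
  finally show ?thesis by (rule sym)
qed (simp add: tri_binom_def)

lemma tri_binom_Suc_div:
  assumes "N > 0"
  shows "tri_binom (Suc k) (y div N) u = (\<Sum>r<Suc u. tri_binom k ((y + r * N) div N) u)"
  using assms by (simp add: tri_binom_Suc add.commute)

lemma sum_PiE_tri_binom:
  assumes N: "N > 0"
  shows "(\<Sum>d\<in>{0..<k} \<rightarrow>\<^sub>E {0..<N}. tri_binom k (((\<Sum>i<k. d i) + x) div N) u)
       = tri_binom k x (Suc u * N - 1)"
proof (induction k arbitrary: x)
  case 0
  have "x div N < Suc u \<longleftrightarrow> x < Suc u * N"
    by (rule div_less_iff_less_mult[OF N])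
  moreover have "Suc u * N > 0" using N by simp
  ultimately have "x div N \<le> u \<longleftrightarrow> x \<le> Suc u * N - 1"
    by arith
  then show ?case by (simp add: tri_binom_def)
next
  case (Suc k)
  define U where "U = Suc u * N - 1"
  have SU: "Suc U = Suc u * N" using N by (simp add: U_def)
  let ?D = "{0..<k} \<rightarrow>\<^sub>E {0..<N}"
  have "(\<Sum>d\<in>{0..<Suc k} \<rightarrow>\<^sub>E {0..<N}. tri_binom (Suc k) (((\<Sum>i<Suc k. d i) + x) div N) u)
      = (\<Sum>a<N. \<Sum>d\<in>?D. tri_binom (Suc k) ((a + (\<Sum>i<k. d i) + x) div N) u)"
    using sum_PiE_lessThan_Suc[of "{0..<N}" "\<lambda>s. tri_binom (Suc k) ((s + x) div N) u" k]
    by (simp add: lessThan_atLeast0)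
  also have "\<dots> = (\<Sum>a<N. \<Sum>d\<in>?D. \<Sum>r<Suc u. tri_binom k ((a + (\<Sum>i<k. d i) + x + r * N) div N) u)"
    by (simp add: tri_binom_Suc_div[OF N])
  also have "\<dots> = (\<Sum>a<N. \<Sum>r<Suc u. \<Sum>d\<in>?D. tri_binom k (((\<Sum>i<k. d i) + (x + (r * N + a))) div N) u)"
    by (rule sum.cong[OF refl], subst sum.swap) (simp add: ac_simps)
  also have "\<dots> = (\<Sum>r<Suc u. \<Sum>a<N. tri_binom k (x + (r * N + a)) U)"
    by (subst sum.swap) (simp add: Suc.IH U_def)
  also have "\<dots> = (\<Sum>b<Suc U. tri_binom k (x + b) U)"
    unfolding SU by (rule sum_lessThan_mult_blocks)
  also have "\<dots> = tri_binom (Suc k) x U"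
    by (rule tri_binom_Suc[symmetric])
  finally show ?case by (simp add: U_def)
qed

lemma sum_carryH_weighted:
  assumes "\<And>j. j \<ge> n \<Longrightarrow> f j = 0"
  shows "(\<Sum>j<n. carryH k N c j * f j) = (\<Sum>d\<in>{0..<k} \<rightarrow>\<^sub>E {0..<N}. f (((\<Sum>i<k. d i) + c) div N))"
proof -
  let ?D = "{0..<k} \<rightarrow>\<^sub>E {0..<N}"
  let ?J = "\<lambda>d. ((\<Sum>i<k. d i) + c) div N"
  have "(\<Sum>j<n. carryH k N c j * f j) = (\<Sum>j<n. \<Sum>d\<in>?D. if ?J d = j then f j else 0)"
    by (simp add: carryH_def sum.inter_filter[symmetric] finite_PiE)
  also have "\<dots> = (\<Sum>d\<in>?D. \<Sum>j<n. if ?J d = j then f j else 0)"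
    by (rule sum.swap)
  also have "\<dots> = (\<Sum>d\<in>?D. f (?J d))"
    using assms by (intro sum.cong refl) (auto simp: sum.delta')
  finally show ?thesis .
qed

lemma det_Htilde_tri_binom:
  assumes N: "N > 0"
  shows "det (map_mat of_int (Htilde k N))
       = det (mat (k - 1) (k - 1) (\<lambda>(c, u). of_nat (tri_binom k c (Suc u * N - 1)) :: 'a::comm_ring_1))"
proof -
  define n where "n = k - 1"
  define T :: "'a mat" where "T = mat n n (\<lambda>(j, u). of_nat (tri_binom k j u))"
  have H: "map_mat of_int (Htilde k N) = mat n n (\<lambda>(c, j). of_nat (carryH k N c j) :: 'a)"
    unfolding Htilde_def n_def by (rule eq_matI) auto
  have "(\<Sum>j<n. of_nat (carryH k N c j) * of_nat (tri_binom k j u))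
      = (of_nat (tri_binom k c (Suc u * N - 1)) :: 'a)" if "u < n" for c u
  proof -
    have "(\<Sum>j<n. carryH k N c j * tri_binom k j u)
        = (\<Sum>d\<in>{0..<k} \<rightarrow>\<^sub>E {0..<N}. tri_binom k (((\<Sum>i<k. d i) + c) div N) u)"
      by (rule sum_carryH_weighted) (use that in \<open>simp add: tri_binom_def\<close>)
    also have "\<dots> = tri_binom k c (Suc u * N - 1)"
      by (rule sum_PiE_tri_binom[OF N])
    finally show ?thesis
      unfolding of_nat_mult[symmetric] of_nat_sum[symmetric] by (rule arg_cong)
  qed
  then have "map_mat of_int (Htilde k N) * T = mat n n (\<lambda>(c, u). of_nat (tri_binom k c (Suc u * N - 1)))"
    unfolding H T_def mat_mult_mat by (intro eq_matI) auto
  moreover have "det T = 1"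
    unfolding T_def by (subst det_mat_upper_triangular) (auto simp: tri_binom_def)
  moreover have "det (map_mat of_int (Htilde k N) * T) = det (map_mat of_int (Htilde k N)) * det T"
    by (rule det_mult[of _ n]) (auto simp: T_def Htilde_def n_def)
  ultimately show ?thesis by (simp add: n_def)
qed

lemma of_nat_tri_binom_pochhammer:
  assumes "i \<le> U + k"
  shows "(of_nat (tri_binom k i U) :: 'a::field_char_0) = pochhammer (of_nat (Suc U) - of_nat i) k / fact k"
proof (cases "i \<le> U")
  case True
  have "(of_nat ((U - i + k) choose k) :: 'a) = of_nat (U - i + k) gchoose k"
    by (rule binomial_gbinomial)
  also have "\<dots> = pochhammer (of_nat (U - i + k) - of_nat k + 1) k / fact k"
    by (rule gbinomial_pochhammer')
  also have "of_nat (U - i + k) - of_nat k + 1 = (of_nat (Suc U) - of_nat i :: 'a)"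
    using True by (simp add: of_nat_diff)
  finally show ?thesis using True by (simp add: tri_binom_def)
next
  case False
  then have "of_nat (Suc U) - of_nat i = - (of_nat (i - Suc U) :: 'a)"
    by (simp add: of_nat_diff)
  moreover have "i - Suc U < k" using assms False by simp
  ultimately have "pochhammer (of_nat (Suc U) - of_nat i) k = (0 :: 'a)"
    by (simp add: pochhammer_of_nat_eq_0_iff)
  then show ?thesis using False by (simp add: tri_binom_def)
qed

lemma det_Htilde_pochhammer:
  assumes N: "N > 0"
  shows "det (map_mat of_int (Htilde k N)) = det (mat (k - 1) (k - 1)
           (\<lambda>(i, u). pochhammer (of_nat N * of_nat (Suc u) - of_nat i) k / fact k :: 'a::field_char_0))"
proof -
  have "of_nat (tri_binom k i (Suc u * N - 1))
      = (pochhammer (of_nat N * of_nat (Suc u) - of_nat i) k / fact k :: 'a)" if "i < k - 1" for i u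
  proof -
    have "Suc (Suc u * N - 1) = N * Suc u" using N by simp
    moreover have "i \<le> (Suc u * N - 1) + k" using that by simp
    ultimately show ?thesis
      by (metis of_nat_mult of_nat_tri_binom_pochhammer)
  qed
  then show ?thesis
    unfolding det_Htilde_tri_binom[OF N] by (intro arg_cong[where f = det] eq_matI) auto
qed

definition pochhammer_cofactor :: "nat \<Rightarrow> nat \<Rightarrow> 'a::comm_ring_1 poly" where
  "pochhammer_cofactor k i = (\<Prod>r\<in>{0..<k} - {i, Suc i}. [:of_nat r - of_nat i, 1:])"

lemma poly_pochhammer_cofactor:
  "poly (pochhammer_cofactor k i) y = (\<Prod>r\<in>{0..<k} - {i, Suc i}. y - of_nat i + of_nat r)"
  unfolding pochhammer_cofactor_def poly_prod by (intro prod.cong) (auto simp: algebra_simps)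

lemma pochhammer_eq_cofactor:
  assumes "Suc i < k"
  shows "pochhammer (y - of_nat i) k = y * (y + 1) * poly (pochhammer_cofactor k i) y"
proof -
  have split: "{0..<k} = insert i (insert (Suc i) ({0..<k} - {i, Suc i}))"
    using assms by auto
  have "pochhammer (y - of_nat i) k
      = (y - of_nat i + of_nat i) * ((y - of_nat i + of_nat (Suc i)) * poly (pochhammer_cofactor k i) y)"
    unfolding pochhammer_prod poly_pochhammer_cofactor by (subst split) simp
  then show ?thesis
    by (simp add: algebra_simps)
qed

lemma degree_pochhammer_cofactor:
  assumes "Suc i < k"
  shows "degree (pochhammer_cofactor k i :: 'a::comm_ring_1 poly) < k - 1"
proof -
  have "degree (pochhammer_cofactor k i :: 'a poly) \<le> card ({0..<k} - {i, Suc i})"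
    unfolding pochhammer_cofactor_def
    using degree_prod_sum_le[of "{0..<k} - {i, Suc i}" "\<lambda>r. [:of_nat r - of_nat i :: 'a, 1:]"]
    by (simp add: o_def)
  also have "\<dots> = k - 2"
    using assms by (subst card_Diff_subset) auto
  finally show ?thesis using assms by simp
qed

lemma poly_pochhammer_cofactor_below_diag:
  assumes "u < i" and "Suc i < k"
  shows "poly (pochhammer_cofactor k i) (of_nat (Suc u)) = (0 :: 'a::comm_ring_1)"
proof -
  have "i - Suc u \<in> {0..<k} - {i, Suc i}"
    using assms by auto
  moreover have "of_nat (Suc u) - of_nat i + of_nat (i - Suc u) = (0 :: 'a::comm_ring_1)"
    using assms by (simp add: of_nat_diff)
  ultimately show ?thesis
    unfolding poly_pochhammer_cofactor by (intro prod_zero) auto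
qed

lemma poly_pochhammer_cofactor_diag:
  assumes "Suc i < k"
  shows "of_nat (Suc i) * of_nat (Suc (Suc i)) * poly (pochhammer_cofactor k i) (of_nat (Suc i))
       = (fact k :: 'a::{comm_ring_1,ring_char_0})"
  using pochhammer_eq_cofactor[OF assms, of "of_nat (Suc i) :: 'a"] by (simp add: pochhammer_fact add.commute)

lemma prod_lessThan_diag_factor:
  fixes a :: "'a::field_char_0"
  shows "(\<Prod>u<n. a * (a * of_nat (Suc u) + 1) / of_nat (Suc (Suc u)))
       = a ^ n * (\<Prod>i=1..n. a * of_nat i + 1) / fact (Suc n)"
proof -
  have "(\<Prod>u<n. of_nat (Suc (Suc u)) :: 'a) = fact (Suc n)"
    by (induction n) (simp_all add: algebra_simps)
  moreover have "(\<Prod>u<n. a * of_nat (Suc u) + 1) = (\<Prod>i=1..n. a * of_nat i + 1)"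
    by (simp add: prod.atLeast1_atMost_eq)
  ultimately show ?thesis
    by (simp add: prod_dividef prod.distrib)
qed

lemma det_pochhammer_mat:
  fixes a :: "'a::field_char_0"
  shows "det (mat n n (\<lambda>(i, u). pochhammer (a * of_nat (Suc u) - of_nat i) (Suc n) / fact (Suc n)))
       = a ^ (Suc n choose 2) / fact (Suc n) * (\<Prod>i=1..n. a * of_nat i + 1)"
proof -
  define q :: "nat \<Rightarrow> 'a poly" where "q = pochhammer_cofactor (Suc n)"
  define M where "M u = a * of_nat (Suc u)" for u
  define c where "c u = M u * (M u + 1) / fact (Suc n)" for u
  have entries: "mat n n (\<lambda>(i, u). pochhammer (M u - of_nat i) (Suc n) / fact (Suc n))
      = mat n n (\<lambda>(i, u). poly (q i) (M u) * c u)"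
    by (intro eq_matI) (auto simp: pochhammer_eq_cofactor q_def c_def)
  have "poly (q u) (of_nat (Suc u)) * c u = a * (a * of_nat (Suc u) + 1) / of_nat (Suc (Suc u))"
    if "u < n" for u
  proof -
    have "of_nat (Suc u) * of_nat (Suc (Suc u)) * poly (q u) (of_nat (Suc u)) = (fact (Suc n) :: 'a)"
      unfolding q_def by (rule poly_pochhammer_cofactor_diag) (use that in simp)
    then show ?thesis
      unfolding c_def M_def by (simp add: field_simps del: of_nat_Suc)
  qed
  then have diag: "(\<Prod>i<n. poly (q i) (of_nat (Suc i))) * (\<Prod>u<n. c u)
      = (\<Prod>u<n. a * (a * of_nat (Suc u) + 1) / of_nat (Suc (Suc u)))"
    unfolding prod.distrib[symmetric] by (intro prod.cong) simp_all
  have "det (mat n n (\<lambda>(i, u). pochhammer (M u - of_nat i) (Suc n) / fact (Suc n)))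
      = det (mat n n (\<lambda>(i, u). poly (q i) (M u))) * (\<Prod>u<n. c u)"
    unfolding entries by (rule det_mat_mult_cols)
  also have "det (mat n n (\<lambda>(i, u). poly (q i) (M u)))
      = a ^ (\<Sum>j<n. j) * det (mat n n (\<lambda>(i, u). poly (q i) (of_nat (Suc u))))"
    unfolding M_def q_def
    by (rule det_mat_poly_scaled) (use degree_pochhammer_cofactor[of _ "Suc n"] in simp)
  also have "det (mat n n (\<lambda>(i, u). poly (q i) (of_nat (Suc u)))) = (\<Prod>i<n. poly (q i) (of_nat (Suc i)))"
    unfolding q_def by (rule det_mat_upper_triangular) (rule poly_pochhammer_cofactor_below_diag; simp)
  also have "a ^ (\<Sum>j<n. j) * (\<Prod>i<n. poly (q i) (of_nat (Suc i))) * (\<Prod>u<n. c u)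
      = a ^ (\<Sum>j<n. j) * (\<Prod>u<n. a * (a * of_nat (Suc u) + 1) / of_nat (Suc (Suc u)))"
    by (simp only: diag mult.assoc)
  also have "\<dots> = a ^ ((\<Sum>j<n. j) + n) * (\<Prod>i=1..n. a * of_nat i + 1) / fact (Suc n)"
    by (simp only: prod_lessThan_diag_factor power_add mult.assoc times_divide_eq_right)
  also have "(\<Sum>j<n. j) + n = Suc n choose 2"
    by (induction n) (simp_all add: numeral_2_eq_2)
  finally show ?thesis
    by (simp add: M_def)
qed

theorem mainTheorem11:
  fixes k N :: nat
  assumes "k \<ge> 2" and "N \<ge> 2"
  shows "(of_int (det (Htilde k N)) :: rat)
         = of_nat N ^ (k choose 2) / of_nat (fact k) * (\<Prod>i=1..k-1. of_nat (i * N + 1))"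
proof -
  define n where "n = k - 1"
  have k: "k = Suc n" and N: "N > 0"
    using assms by (auto simp: n_def)
  have "(of_int (det (Htilde k N)) :: rat) = det (map_mat of_int (Htilde k N))"
    by simp
  also have "\<dots> = det (mat n n (\<lambda>(i, u). pochhammer (of_nat N * of_nat (Suc u) - of_nat i) k / fact k))"
    unfolding n_def by (rule det_Htilde_pochhammer[OF N])
  also have "\<dots> = of_nat N ^ (k choose 2) / fact k * (\<Prod>i=1..n. of_nat N * of_nat i + 1)"
    unfolding k by (rule det_pochhammer_mat)
  finally show ?thesis
    by (simp add: n_def ac_simps)
qed

end
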